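(* For every infinite group $G$, $FT_G\subsetneq Sp_G$; consequently $\overline{G^*G^*}\subsetneq FT_G^{\wedge}$.
   Context: A subset $A$ of $G$ is $n$-thin ($n\in\mathbb{N}$) if for all distinct $g_0,\dots,g_n\in G$ the set $g_0A\cap\dots\cap g_nA$ is finite; finitely thin if it is $n$-thin for some $n$. $FT_G$ is the family of finitely thin subsets. $A$ is sparse if for every infinite $X\subseteq G$ there is finite $F\subseteq X$ with $\bigcap_{g\in F}gA$ finite; $Sp_G$ is the family of sparse subsets. $\beta G$ is the semigroup of ultrafilters on $G$ (with the standard extension of multiplication), $G^*$ the free ultrafilters, $\overline{G^*G^*}$ the closure of $\{pq:p,q\in G^*\}$. For an ideal $\mathcal{I}$ of subsets of $G$, $\mathcal{I}^{\wedge}=\{p\in\beta G: G\setminus A\in p$ for each $A\in\mathcal{I}\}$. *)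

theory Defs
  imports "HOL-Algebra.Group" "HOL-Algebra.Coset"
begin

definition n_thin :: "('a, 'b) monoid_scheme \<Rightarrow> nat \<Rightarrow> 'a set \<Rightarrow> bool" where
  "n_thin G n A \<longleftrightarrow> A \<subseteq> carrier G \<and>
     (\<forall>g :: nat \<Rightarrow> 'a. (\<forall>i\<le>n. g i \<in> carrier G) \<and> inj_on g {..n} \<longrightarrow>
        finite (\<Inter>i\<in>{..n}. g i <#\<^bsub>G\<^esub> A))"

definition FT :: "('a, 'b) monoid_scheme \<Rightarrow> 'a set set" where
  "FT G = {A. A \<subseteq> carrier G \<and> (\<exists>n. n_thin G n A)}"

definition Sp :: "('a, 'b) monoid_scheme \<Rightarrow> 'a set set" where
  "Sp G = {A. A \<subseteq> carrier G \<and>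
     (\<forall>X. X \<subseteq> carrier G \<and> infinite X \<longrightarrow>
        (\<exists>F. F \<subseteq> X \<and> finite F \<and> F \<noteq> {} \<and> finite (\<Inter>g\<in>F. g <#\<^bsub>G\<^esub> A)))}"

text \<open>The Stone-Cech compactification \<beta>G: ultrafilters on the set G.\<close>
definition betaG :: "('a, 'b) monoid_scheme \<Rightarrow> 'a set set set" where
  "betaG G = {U. U \<subseteq> Pow (carrier G) \<and> carrier G \<in> U \<and> {} \<notin> U \<and>
     (\<forall>A B. A \<in> U \<and> B \<in> U \<longrightarrow> A \<inter> B \<in> U) \<and>
     (\<forall>A B. A \<in> U \<and> A \<subseteq> B \<and> B \<subseteq> carrier G \<longrightarrow> B \<in> U) \<and>
     (\<forall>A. A \<subseteq> carrier G \<longrightarrow> A \<in> U \<or> carrier G - A \<in> U)}"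

definition freeUF :: "('a, 'b) monoid_scheme \<Rightarrow> 'a set set set" where
  "freeUF G = {p \<in> betaG G. \<forall>A\<in>p. infinite A}"

definition uf_mult :: "('a, 'b) monoid_scheme \<Rightarrow> 'a set set \<Rightarrow> 'a set set \<Rightarrow> 'a set set" where
  "uf_mult G p q = {A. A \<subseteq> carrier G \<and>
     {g \<in> carrier G. (inv\<^bsub>G\<^esub> g) <#\<^bsub>G\<^esub> A \<in> q} \<in> p}"

text \<open>Closure in the Stone topology of \<beta>G (basic open sets \<bar>A\<bar> = {p. A \<in> p}).\<close>
definition uf_closure :: "('a, 'b) monoid_scheme \<Rightarrow> 'a set set set \<Rightarrow> 'a set set set" where
  "uf_closure G S = {p \<in> betaG G. \<forall>A\<in>p. \<exists>q\<in>S. A \<in> q}"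

definition ideal_hat :: "('a, 'b) monoid_scheme \<Rightarrow> 'a set set \<Rightarrow> 'a set set set" where
  "ideal_hat G I = {p \<in> betaG G. \<forall>A\<in>I. carrier G - A \<in> p}"

end

theory Submission
  imports Defs "HOL-Library.Nat_Bijection"
begin

(* A product pq of free ultrafilters contains no sparse set B: the g with g^-1 B in q form a
   member of p, hence an infinite set, and sparseness yields finitely many of them whose
   translates g^-1 B meet in a finite set, which nevertheless belongs to the free ultrafilter q.
   Thin sets are sparse, so the closure of G*G* avoids every finitely thin set.  For the strict
   inclusions it suffices to find a sparse set B that is not finitely thin: an ultrafilter
   containing B and the complements of all finitely thin sets lies in FT^ but not in the closure.

   B is a union of pieces L_n x_j, where |L_n| = n + 1, the difference sets {a b^-1 | a ~= b in L_n}
   are pairwise disjoint, each L_n is used for infinitely many j, and the x_j are chosen one at a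
   time so that quotients between distinct pieces never recur at a later stage.  The infinitely
   many translates of L_n inside B defeat n-thinness.  Given an infinite X, pick g1 ~= g2 in X;
   g2^-1 g1 is a difference of at most one L_n, and any F in X of size n + 2 containing g1, g2 is
   a witness of sparseness: if y lies in every g B (g in F), the points g^-1 y cannot all lie in
   one piece (F would inject into it), and two of them in distinct pieces leave only finitely
   many possibilities for y. *)

section \<open>Ultrafilters extending a family with the finite intersection property\<close>

definition finite_inter_prop :: "'a set \<Rightarrow> 'a set set \<Rightarrow> bool" where
  "finite_inter_prop \<Omega> U \<longleftrightarrow> (\<forall>S. finite S \<longrightarrow> S \<subseteq> U \<longrightarrow> \<Omega> \<inter> \<Inter>S \<noteq> {})"

lemma finite_inter_propD:
  "finite_inter_prop \<Omega> U \<Longrightarrow> finite S \<Longrightarrow> S \<subseteq> U \<Longrightarrow> \<Omega> \<inter> \<Inter>S \<noteq> {}"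
  unfolding finite_inter_prop_def by simp

lemma finite_inter_prop_insert:
  assumes "finite_inter_prop \<Omega> U" "finite S\<^sub>0" "S\<^sub>0 \<subseteq> U" "\<Omega> \<inter> \<Inter>S\<^sub>0 \<subseteq> B"
  shows "finite_inter_prop \<Omega> (insert B U)"
  unfolding finite_inter_prop_def
proof (intro allI impI)
  fix S assume S: "finite S" "S \<subseteq> insert B U"
  have "finite (S - {B} \<union> S\<^sub>0)" "S - {B} \<union> S\<^sub>0 \<subseteq> U" using S assms(2,3) by auto
  then have "\<Omega> \<inter> \<Inter>(S - {B} \<union> S\<^sub>0) \<noteq> {}" by (rule finite_inter_propD[OF assms(1)])
  moreover have "\<Omega> \<inter> \<Inter>(S - {B} \<union> S\<^sub>0) \<subseteq> \<Omega> \<inter> \<Inter>S"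
    using assms(4) by blast
  ultimately show "\<Omega> \<inter> \<Inter>S \<noteq> {}" by blast
qed

lemma finite_inter_prop_maximal:
  assumes "U \<subseteq> Pow \<Omega>" "finite_inter_prop \<Omega> U"
  obtains M where "U \<subseteq> M" "M \<subseteq> Pow \<Omega>" "finite_inter_prop \<Omega> M"
    "\<And>V. M \<subseteq> V \<Longrightarrow> V \<subseteq> Pow \<Omega> \<Longrightarrow> finite_inter_prop \<Omega> V \<Longrightarrow> V = M"
proof -
  define \<A> where "\<A> = {V. U \<subseteq> V \<and> V \<subseteq> Pow \<Omega> \<and> finite_inter_prop \<Omega> V}"
  have "\<exists>M\<in>\<A>. \<forall>V\<in>\<A>. M \<subseteq> V \<longrightarrow> V = M"
  proof (rule subset_Zorn_nonempty)
    show "\<A> \<noteq> {}" using assms unfolding \<A>_def by blast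
  next
    fix \<C> assume "\<C> \<noteq> {}" "subset.chain \<A> \<C>"
    then have C: "\<C> \<subseteq> \<A>" by (simp add: subset_chain_def)
    have "finite_inter_prop \<Omega> (\<Union>\<C>)"
      unfolding finite_inter_prop_def
    proof (intro allI impI)
      fix S assume "finite S" "S \<subseteq> \<Union>\<C>"
      then obtain V where "V \<in> \<C>" "S \<subseteq> V"
        using finite_subset_Union_chain \<open>\<C> \<noteq> {}\<close> \<open>subset.chain \<A> \<C>\<close> by blast
      then have "finite_inter_prop \<Omega> V" using C unfolding \<A>_def by blast
      then show "\<Omega> \<inter> \<Inter>S \<noteq> {}" using \<open>finite S\<close> \<open>S \<subseteq> V\<close> by (rule finite_inter_propD)
    qed
    then show "\<Union>\<C> \<in> \<A>" using C \<open>\<C> \<noteq> {}\<close> unfolding \<A>_def by blast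
  qed
  then obtain M where "M \<in> \<A>" and max: "\<And>V. V \<in> \<A> \<Longrightarrow> M \<subseteq> V \<Longrightarrow> V = M"
    by blast
  show thesis
  proof (rule that)
    show "U \<subseteq> M" "M \<subseteq> Pow \<Omega>" "finite_inter_prop \<Omega> M"
      using \<open>M \<in> \<A>\<close> unfolding \<A>_def by simp_all
    show "V = M" if "M \<subseteq> V" "V \<subseteq> Pow \<Omega>" "finite_inter_prop \<Omega> V" for V
      using max[of V] that \<open>U \<subseteq> M\<close> unfolding \<A>_def by blast
  qed
qed

lemma maximal_finite_inter_prop_in_betaG:
  fixes G :: "('a, 'b) monoid_scheme"
  assumes M: "M \<subseteq> Pow (carrier G)" "finite_inter_prop (carrier G) M"
    and max: "\<And>V. M \<subseteq> V \<Longrightarrow> V \<subseteq> Pow (carrier G) \<Longrightarrow> finite_inter_prop (carrier G) V \<Longrightarrow> V = M"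
  shows "M \<in> betaG G"
proof -
  have absorb: "B \<in> M" if "finite S" "S \<subseteq> M" "carrier G \<inter> \<Inter>S \<subseteq> B" "B \<subseteq> carrier G" for S B
  proof -
    have "insert B M = M"
      by (rule max) (use finite_inter_prop_insert[OF M(2) that(1-3)] M(1) that(4) in auto)
    then show ?thesis by blast
  qed
  have separate: "\<exists>S. finite S \<and> S \<subseteq> M \<and> carrier G \<inter> \<Inter>S \<inter> A = {}"
    if "A \<subseteq> carrier G" "A \<notin> M" for A
  proof -
    have "\<not> finite_inter_prop (carrier G) (insert A M)"
    proof
      assume "finite_inter_prop (carrier G) (insert A M)"
      then have "insert A M = M" by (intro max) (use M(1) that(1) in auto)
      then show False using that(2) by blast
    qed
    then obtain S where S: "finite S" "S \<subseteq> insert A M" "carrier G \<inter> \<Inter>S = {}"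
      unfolding finite_inter_prop_def by blast
    have "carrier G \<inter> \<Inter>(S - {A}) \<inter> A \<subseteq> carrier G \<inter> \<Inter>S" by blast
    moreover have "finite (S - {A})" "S - {A} \<subseteq> M" using S by auto
    ultimately show ?thesis using S(3) by (intro exI[of _ "S - {A}"]) simp
  qed
  show ?thesis
    unfolding betaG_def
  proof (intro CollectI conjI allI impI)
    show "carrier G \<in> M" by (rule absorb[of "{}"]) auto
    show "{} \<notin> M"
    proof
      assume "{} \<in> M"
      then have "carrier G \<inter> \<Inter>{{}} \<noteq> {}"
        by (intro finite_inter_propD[OF M(2)]) auto
      then show False by simp
    qed
    show "A \<inter> B \<in> M" if "A \<in> M \<and> B \<in> M" for A B
      by (rule absorb[of "{A, B}"]) (use that M(1) in auto)
    show "B \<in> M" if "A \<in> M \<and> A \<subseteq> B \<and> B \<subseteq> carrier G" for A B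
      by (rule absorb[of "{A}"]) (use that in auto)
    show "A \<in> M \<or> carrier G - A \<in> M" if A: "A \<subseteq> carrier G" for A
    proof (rule ccontr)
      assume "\<not> ?thesis"
      then obtain S T where "finite S" "S \<subseteq> M" "carrier G \<inter> \<Inter>S \<inter> A = {}"
        "finite T" "T \<subseteq> M" "carrier G \<inter> \<Inter>T \<inter> (carrier G - A) = {}"
        using separate[OF A] separate[of "carrier G - A"] by blast
      then have "carrier G \<inter> \<Inter>(S \<union> T) = {}" by blast
      moreover have "carrier G \<inter> \<Inter>(S \<union> T) \<noteq> {}"
        using M(2) \<open>finite S\<close> \<open>finite T\<close> \<open>S \<subseteq> M\<close> \<open>T \<subseteq> M\<close> by (simp add: finite_inter_propD)
      ultimately show False by blast
    qed
  qed (use M(1) in blast)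
qed

lemma ultrafilter_extension:
  fixes G :: "('a, 'b) monoid_scheme"
  assumes "U \<subseteq> Pow (carrier G)" "finite_inter_prop (carrier G) U"
  obtains p where "p \<in> betaG G" "U \<subseteq> p"
proof -
  obtain M where M: "U \<subseteq> M" "M \<subseteq> Pow (carrier G)" "finite_inter_prop (carrier G) M"
    and max: "\<And>V. M \<subseteq> V \<Longrightarrow> V \<subseteq> Pow (carrier G) \<Longrightarrow> finite_inter_prop (carrier G) V \<Longrightarrow> V = M"
    using finite_inter_prop_maximal[OF assms] by blast
  have "M \<in> betaG G" using M(2,3) max by (rule maximal_finite_inter_prop_in_betaG)
  then show thesis using M(1) by (rule that)
qed

section \<open>Closure of a family of ultrafilters versus the hat of an ideal\<close>

lemma betaG_Int: "p \<in> betaG G \<Longrightarrow> A \<in> p \<Longrightarrow> B \<in> p \<Longrightarrow> A \<inter> B \<in> p"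
  unfolding betaG_def by blast

lemma betaG_complement: "p \<in> betaG G \<Longrightarrow> A \<subseteq> carrier G \<Longrightarrow> A \<notin> p \<Longrightarrow> carrier G - A \<in> p"
  unfolding betaG_def by blast

lemma betaG_Inter:
  assumes "p \<in> betaG G" "finite S" "S \<noteq> {}" "S \<subseteq> p"
  shows "\<Inter>S \<in> p"
  using assms(2-4) by (induction rule: finite_ne_induct) (simp_all add: betaG_Int[OF assms(1)])

lemma uf_closure_subset_ideal_hat:
  assumes "I \<subseteq> Pow (carrier G)" and avoid: "\<And>A q. A \<in> I \<Longrightarrow> q \<in> S \<Longrightarrow> A \<notin> q"
  shows "uf_closure G S \<subseteq> ideal_hat G I"
proof
  fix p assume p: "p \<in> uf_closure G S"
  then have "p \<in> betaG G" unfolding uf_closure_def by blast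
  moreover have "A \<notin> p" if "A \<in> I" for A
    using p avoid[OF that] unfolding uf_closure_def by blast
  ultimately show "p \<in> ideal_hat G I"
    unfolding ideal_hat_def using assms(1) betaG_complement by blast
qed

lemma ideal_hat_not_subset_uf_closure:
  assumes I: "I \<subseteq> Pow (carrier G)" "\<And>\<C>. finite \<C> \<Longrightarrow> \<C> \<subseteq> I \<Longrightarrow> \<Union>\<C> \<in> I"
      "\<And>A C. A \<in> I \<Longrightarrow> C \<subseteq> A \<Longrightarrow> C \<in> I"
    and B: "B \<subseteq> carrier G" "B \<notin> I" "\<And>q. q \<in> S \<Longrightarrow> B \<notin> q"
  shows "\<not> ideal_hat G I \<subseteq> uf_closure G S"
proof -
  define U where "U = insert B ((\<lambda>C. carrier G - C) ` I)"
  have "finite_inter_prop (carrier G) U"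
    unfolding finite_inter_prop_def
  proof (intro allI impI)
    fix T assume T: "finite T" "T \<subseteq> U"
    define \<C> where "\<C> = {C \<in> I. carrier G - C \<in> T}"
    have "\<C> \<subseteq> (\<lambda>X. carrier G - X) ` T"
    proof
      fix C assume C: "C \<in> \<C>"
      then have "C = carrier G - (carrier G - C)" using I(1) unfolding \<C>_def by auto
      then show "C \<in> (\<lambda>X. carrier G - X) ` T" using C unfolding \<C>_def by blast
    qed
    then have "finite \<C>" using T(1) finite_surj by blast
    then have "\<Union>\<C> \<in> I" using I(2) unfolding \<C>_def by blast
    then have "\<not> B \<subseteq> \<Union>\<C>" using I(3) B(2) by blast
    moreover have "B - \<Union>\<C> \<subseteq> carrier G \<inter> \<Inter>T"
    proof
      fix b assume b: "b \<in> B - \<Union>\<C>"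
      have "b \<in> X" if X: "X \<in> T" for X
      proof (cases "X = B")
        case False
        then obtain C where "C \<in> I" "X = carrier G - C" using X T(2) unfolding U_def by blast
        then show ?thesis using b B(1) X unfolding \<C>_def by blast
      qed (use b in simp)
      then show "b \<in> carrier G \<inter> \<Inter>T" using b B(1) by blast
    qed
    ultimately show "carrier G \<inter> \<Inter>T \<noteq> {}" by blast
  qed
  moreover have "U \<subseteq> Pow (carrier G)" unfolding U_def using B(1) by blast
  ultimately obtain p where p: "p \<in> betaG G" "U \<subseteq> p" by (metis ultrafilter_extension)
  then have "p \<in> ideal_hat G I" unfolding ideal_hat_def U_def by blast
  moreover have "p \<notin> uf_closure G S"
    using p(2) B(3) unfolding uf_closure_def U_def by blast
  ultimately show ?thesis by blast
qed

section \<open>Finitely thin and sparse sets\<close>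

lemma Inter_Un_subset_pigeonhole:
  assumes "card S = Suc (n + m + 1)"
  shows "(\<Inter>g\<in>S. f g \<union> h g) \<subseteq>
    (\<Union>T\<in>{T. T \<subseteq> S \<and> card T = Suc n}. \<Inter>g\<in>T. f g) \<union>
    (\<Union>T\<in>{T. T \<subseteq> S \<and> card T = Suc m}. \<Inter>g\<in>T. h g)"
proof
  fix x assume x: "x \<in> (\<Inter>g\<in>S. f g \<union> h g)"
  have "S = {g \<in> S. x \<in> f g} \<union> {g \<in> S. x \<in> h g}" using x by blast
  then have "card S \<le> card {g \<in> S. x \<in> f g} + card {g \<in> S. x \<in> h g}"
    by (metis card_Un_le)
  then have "Suc n \<le> card {g \<in> S. x \<in> f g} \<or> Suc m \<le> card {g \<in> S. x \<in> h g}"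
    using assms by linarith
  then show "x \<in> (\<Union>T\<in>{T. T \<subseteq> S \<and> card T = Suc n}. \<Inter>g\<in>T. f g) \<union>
    (\<Union>T\<in>{T. T \<subseteq> S \<and> card T = Suc m}. \<Inter>g\<in>T. h g)"
  proof
    assume "Suc n \<le> card {g \<in> S. x \<in> f g}"
    then obtain T where "T \<subseteq> {g \<in> S. x \<in> f g}" "card T = Suc n"
      by (rule obtain_subset_with_card_n)
    then show ?thesis by blast
  next
    assume "Suc m \<le> card {g \<in> S. x \<in> h g}"
    then obtain T where "T \<subseteq> {g \<in> S. x \<in> h g}" "card T = Suc m"
      by (rule obtain_subset_with_card_n)
    then show ?thesis by blast
  qed
qed

context group
begin

lemma inv_mult_cancel_left [simp]: "x \<in> carrier G \<Longrightarrow> y \<in> carrier G \<Longrightarrow> inv x \<otimes> (x \<otimes> y) = y"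
  by (simp add: m_assoc[symmetric])

lemma mult_inv_cancel_left [simp]: "x \<in> carrier G \<Longrightarrow> y \<in> carrier G \<Longrightarrow> x \<otimes> (inv x \<otimes> y) = y"
  by (simp add: m_assoc[symmetric])

lemma mem_l_coset_iff:
  assumes "g \<in> carrier G" "A \<subseteq> carrier G"
  shows "x \<in> g <# A \<longleftrightarrow> x \<in> carrier G \<and> inv g \<otimes> x \<in> A"
proof
  assume "x \<in> g <# A"
  then obtain a where "a \<in> A" "x = g \<otimes> a" unfolding l_coset_def by blast
  then show "x \<in> carrier G \<and> inv g \<otimes> x \<in> A"
    using assms by (auto simp: m_assoc[symmetric])
next
  assume x: "x \<in> carrier G \<and> inv g \<otimes> x \<in> A"
  then have "x = g \<otimes> (inv g \<otimes> x)" using assms(1) by (simp add: m_assoc[symmetric])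
  then show "x \<in> g <# A" unfolding l_coset_def using x by blast
qed

lemma n_thinD:
  "n_thin G n A \<Longrightarrow> (\<And>i. i \<le> n \<Longrightarrow> g i \<in> carrier G) \<Longrightarrow> inj_on g {..n} \<Longrightarrow>
    finite (\<Inter>i\<in>{..n}. g i <# A)"
  unfolding n_thin_def by simp

lemma n_thin_finite_Inter:
  assumes "n_thin G n A" "S \<subseteq> carrier G" "card S = Suc n"
  shows "finite (\<Inter>g\<in>S. g <# A)"
proof -
  have "finite S" using assms(3) card.infinite by fastforce
  then obtain h where h: "bij_betw h {..n} S"
    using assms(3) finite_same_card_bij[of "{..n}" S] by auto
  then have "finite (\<Inter>i\<in>{..n}. h i <# A)"
    using assms(2) bij_betw_apply[OF h] by (intro n_thinD[OF assms(1)]) (auto simp: bij_betw_def)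
  moreover have "S = h ` {..n}" using h by (simp add: bij_betw_def)
  ultimately show ?thesis by (simp add: image_image)
qed

lemma n_thinI:
  assumes "A \<subseteq> carrier G"
    and "\<And>S. S \<subseteq> carrier G \<Longrightarrow> card S = Suc n \<Longrightarrow> finite (\<Inter>g\<in>S. g <# A)"
  shows "n_thin G n A"
  unfolding n_thin_def
proof (intro conjI allI impI)
  fix h :: "nat \<Rightarrow> 'a" assume h: "(\<forall>i\<le>n. h i \<in> carrier G) \<and> inj_on h {..n}"
  then have "h ` {..n} \<subseteq> carrier G" "card (h ` {..n}) = Suc n"
    by (auto simp: card_image)
  then have "finite (\<Inter>g\<in>h ` {..n}. g <# A)" by (rule assms(2))
  then show "finite (\<Inter>i\<in>{..n}. h i <# A)" by (simp add: image_image)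
qed (use assms(1) in blast)

lemma n_thin_subset:
  assumes "n_thin G n A" "C \<subseteq> A"
  shows "n_thin G n C"
proof (rule n_thinI)
  show "C \<subseteq> carrier G" using assms unfolding n_thin_def by blast
  fix S assume S: "S \<subseteq> carrier G" "card S = Suc n"
  have "(\<Inter>g\<in>S. g <# C) \<subseteq> (\<Inter>g\<in>S. g <# A)"
    using assms(2) S(2) unfolding l_coset_def by fastforce
  then show "finite (\<Inter>g\<in>S. g <# C)"
    using n_thin_finite_Inter[OF assms(1) S] finite_subset by blast
qed

lemma n_thin_Un:
  assumes "n_thin G n A" "n_thin G m C"
  shows "n_thin G (n + m + 1) (A \<union> C)"
proof (rule n_thinI)
  show "A \<union> C \<subseteq> carrier G" using assms unfolding n_thin_def by blast
  fix S assume S: "S \<subseteq> carrier G" "card S = Suc (n + m + 1)"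
  then have S_fin: "finite S" using card.infinite by fastforce
  have "finite (\<Union>T\<in>{T. T \<subseteq> S \<and> card T = Suc n}. \<Inter>g\<in>T. g <# A)"
    using S_fin S(1) n_thin_finite_Inter[OF assms(1)] by (intro finite_UN_I) auto
  moreover have "finite (\<Union>T\<in>{T. T \<subseteq> S \<and> card T = Suc m}. \<Inter>g\<in>T. g <# C)"
    using S_fin S(1) n_thin_finite_Inter[OF assms(2)] by (intro finite_UN_I) auto
  moreover have "g <# (A \<union> C) = (g <# A) \<union> (g <# C)" for g
    unfolding l_coset_def by blast
  ultimately show "finite (\<Inter>g\<in>S. g <# (A \<union> C))"
    using Inter_Un_subset_pigeonhole[OF S(2), of "\<lambda>g. g <# A" "\<lambda>g. g <# C"]
    by (simp add: finite_subset)
qed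

lemma FT_Union:
  assumes "finite \<C>" "\<C> \<subseteq> FT G"
  shows "\<Union>\<C> \<in> FT G"
  using assms
proof (induction rule: finite_induct)
  case empty
  have "n_thin G 0 {}"
  proof (rule n_thinI)
    fix S :: "'a set" assume "card S = Suc 0"
    then obtain g where "S = {g}" by (auto simp: card_Suc_eq)
    then show "finite (\<Inter>g\<in>S. g <# {})" by (simp add: l_coset_def)
  qed simp
  then show ?case unfolding FT_def by auto
next
  case (insert A \<C>)
  then obtain n m where "n_thin G n A" "n_thin G m (\<Union>\<C>)" unfolding FT_def by auto
  then have "n_thin G (n + m + 1) (A \<union> \<Union>\<C>)" by (rule n_thin_Un)
  moreover have "A \<union> \<Union>\<C> \<subseteq> carrier G" using insert.prems insert.IH unfolding FT_def by auto
  ultimately show ?case unfolding FT_def by auto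
qed

lemma FT_subset:
  assumes "A \<in> FT G" "C \<subseteq> A"
  shows "C \<in> FT G"
proof -
  obtain n where "n_thin G n A" using assms(1) unfolding FT_def by blast
  then have "n_thin G n C" using assms(2) by (rule n_thin_subset)
  then show ?thesis using assms unfolding FT_def by blast
qed

lemma FT_subset_Sp: "FT G \<subseteq> Sp G"
proof
  fix A assume "A \<in> FT G"
  then obtain n where A: "A \<subseteq> carrier G" "n_thin G n A" unfolding FT_def by blast
  have "\<exists>F. F \<subseteq> X \<and> finite F \<and> F \<noteq> {} \<and> finite (\<Inter>g\<in>F. g <# A)"
    if X: "X \<subseteq> carrier G" "infinite X" for X
  proof -
    obtain F where F: "finite F" "card F = Suc n" "F \<subseteq> X"
      using infinite_arbitrarily_large[OF X(2)] by blast
    moreover have "finite (\<Inter>g\<in>F. g <# A)"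
      using n_thin_finite_Inter[OF A(2)] F X(1) by blast
    ultimately show ?thesis by (intro exI[of _ F]) auto
  qed
  then show "A \<in> Sp G" unfolding Sp_def using A(1) by simp
qed

lemma SpD:
  "B \<in> Sp G \<Longrightarrow> X \<subseteq> carrier G \<Longrightarrow> infinite X \<Longrightarrow>
    \<exists>F. F \<subseteq> X \<and> finite F \<and> F \<noteq> {} \<and> finite (\<Inter>g\<in>F. g <# B)"
  unfolding Sp_def by simp

lemma Sp_notin_uf_mult:
  assumes p: "p \<in> freeUF G" and q: "q \<in> freeUF G" and B: "B \<in> Sp G"
  shows "B \<notin> uf_mult G p q"
proof
  define Z where "Z = {g \<in> carrier G. inv g <# B \<in> q}"
  assume "B \<in> uf_mult G p q"
  then have "Z \<in> p" unfolding uf_mult_def Z_def by blast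
  then have "infinite Z" using p unfolding freeUF_def by blast
  moreover have "inj_on (m_inv G) Z" by (rule inj_on_subset[OF inv_inj]) (auto simp: Z_def)
  ultimately have "infinite (m_inv G ` Z)" by (simp add: finite_image_iff)
  moreover have "m_inv G ` Z \<subseteq> carrier G" unfolding Z_def by auto
  ultimately have "\<exists>F. F \<subseteq> m_inv G ` Z \<and> finite F \<and> F \<noteq> {} \<and> finite (\<Inter>g\<in>F. g <# B)"
    by (intro SpD[OF B])
  then obtain F where F: "F \<subseteq> m_inv G ` Z" "finite F" "F \<noteq> {}" "finite (\<Inter>g\<in>F. g <# B)"
    by blast
  have "(\<lambda>g. g <# B) ` F \<subseteq> q" using F(1) unfolding Z_def by auto
  then have "(\<Inter>g\<in>F. g <# B) \<in> q"
    using q F(2,3) unfolding freeUF_def by (intro betaG_Inter) auto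
  then show False using q F(4) unfolding freeUF_def by blast
qed

section \<open>Unions of finite pieces\<close>

definition diff_set :: "'a set \<Rightarrow> 'a set" where
  "diff_set L = {a \<otimes> inv b | a b. a \<in> L \<and> b \<in> L \<and> a \<noteq> b}"

lemma r_coset_eq_image: "L #> x = (\<lambda>a. a \<otimes> x) ` L"
  unfolding r_coset_def by blast

lemma card_r_coset: "L \<subseteq> carrier G \<Longrightarrow> x \<in> carrier G \<Longrightarrow> card (L #> x) = card L"
  unfolding r_coset_eq_image by (intro card_image inj_on_g)

lemma diff_set_r_coset:
  assumes "L \<subseteq> carrier G" "x \<in> carrier G"
  shows "diff_set (L #> x) = diff_set L"
proof -
  have quot: "(a \<otimes> x) \<otimes> inv (b \<otimes> x) = a \<otimes> inv b" if "a \<in> L" "b \<in> L" for a b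
    using assms that by (auto simp: m_assoc inv_mult_group subsetD)
  have eq: "a \<otimes> x = b \<otimes> x \<longleftrightarrow> a = b" if "a \<in> L" "b \<in> L" for a b
    using assms that by (auto simp: subsetD)
  show ?thesis
  proof (intro equalityI subsetI)
    fix w assume "w \<in> diff_set (L #> x)"
    then obtain a b where "a \<in> L" "b \<in> L" "a \<otimes> x \<noteq> b \<otimes> x" "w = (a \<otimes> x) \<otimes> inv (b \<otimes> x)"
      unfolding diff_set_def r_coset_eq_image by blast
    then show "w \<in> diff_set L" unfolding diff_set_def using quot eq by blast
  next
    fix w assume "w \<in> diff_set L"
    then obtain a b where ab: "a \<in> L" "b \<in> L" "a \<noteq> b" "w = a \<otimes> inv b"
      unfolding diff_set_def by blast
    then have "a \<otimes> x \<in> L #> x" "b \<otimes> x \<in> L #> x" "a \<otimes> x \<noteq> b \<otimes> x"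
      "w = (a \<otimes> x) \<otimes> inv (b \<otimes> x)"
      using quot[of a b] eq[of a b] unfolding r_coset_eq_image by auto
    then show "w \<in> diff_set (L #> x)" unfolding diff_set_def by blast
  qed
qed

lemma quotient_of_translates:
  "g \<in> carrier G \<Longrightarrow> h \<in> carrier G \<Longrightarrow> y \<in> carrier G \<Longrightarrow>
    (inv h \<otimes> y) \<otimes> inv (inv g \<otimes> y) = inv h \<otimes> g"
  by (simp add: m_assoc inv_mult_group)

lemma translates_into_set:
  assumes "F \<subseteq> carrier G" "y \<in> carrier G" "finite P" and in_P: "\<And>g. g \<in> F \<Longrightarrow> inv g \<otimes> y \<in> P"
  shows "card F \<le> card P"
    and "\<And>g h. g \<in> F \<Longrightarrow> h \<in> F \<Longrightarrow> g \<noteq> h \<Longrightarrow> inv h \<otimes> g \<in> diff_set P"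
proof -
  have inj: "inj_on (\<lambda>g. inv g \<otimes> y) F"
  proof (rule inj_onI)
    fix g h assume "g \<in> F" "h \<in> F" "inv g \<otimes> y = inv h \<otimes> y"
    then show "g = h" using assms(1,2) inv_inj by (auto simp: inj_on_def subsetD)
  qed
  then show "card F \<le> card P" using in_P assms(3) by (intro card_inj_on_le) auto
  fix g h assume gh: "g \<in> F" "h \<in> F" "g \<noteq> h"
  moreover have "inv h \<otimes> g = (inv h \<otimes> y) \<otimes> inv (inv g \<otimes> y)"
    using calculation assms(1,2) by (simp add: quotient_of_translates subsetD)
  moreover have "inv h \<otimes> y \<noteq> inv g \<otimes> y" using inj calculation(1-3) by (auto simp: inj_on_def)
  ultimately show "inv h \<otimes> g \<in> diff_set P"
    unfolding diff_set_def using in_P[OF gh(1)] in_P[OF gh(2)] by blast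
qed

lemma mem_set_mult_set_inv: "w \<in> P <#> set_inv Q \<longleftrightarrow> (\<exists>a\<in>P. \<exists>b\<in>Q. w = a \<otimes> inv b)"
  unfolding set_mult_def SET_INV_def by blast

lemma finite_Inter_l_coset_UN:
  fixes P :: "nat \<Rightarrow> 'a set"
  assumes P: "\<And>j. P j \<subseteq> carrier G" "\<And>j. finite (P j)"
    and cross: "\<And>w. finite {i. \<exists>j. j \<noteq> i \<and> w \<in> P j <#> set_inv (P i)}"
    and F: "finite F" "F \<subseteq> carrier G" "g\<^sub>1 \<in> F" "g\<^sub>2 \<in> F" "g\<^sub>1 \<noteq> g\<^sub>2"
    and large: "\<And>j. inv g\<^sub>2 \<otimes> g\<^sub>1 \<in> diff_set (P j) \<Longrightarrow> card (P j) < card F"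
  shows "finite (\<Inter>g\<in>F. g <# (\<Union>j. P j))"
proof -
  define I where "I w = {i. \<exists>j. j \<noteq> i \<and> w \<in> P j <#> set_inv (P i)}" for w
  have B: "(\<Union>j. P j) \<subseteq> carrier G" using P(1) by blast
  have "(\<Inter>g\<in>F. g <# (\<Union>j. P j)) \<subseteq> (\<Union>g\<in>F. \<Union>h\<in>F. \<Union>i\<in>I (inv h \<otimes> g). g <# P i)"
  proof
    fix y assume y: "y \<in> (\<Inter>g\<in>F. g <# (\<Union>j. P j))"
    have y_mem: "y \<in> carrier G" "inv g \<otimes> y \<in> (\<Union>j. P j)" if "g \<in> F" for g
      using y that F(2) mem_l_coset_iff[OF _ B] by blast+
    then obtain j where j: "inv g\<^sub>1 \<otimes> y \<in> P j" using F(3) by blast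
    have "\<not> (\<forall>g\<in>F. inv g \<otimes> y \<in> P j)"
    proof
      assume "\<forall>g\<in>F. inv g \<otimes> y \<in> P j"
      then have "card F \<le> card (P j)" "inv g\<^sub>2 \<otimes> g\<^sub>1 \<in> diff_set (P j)"
        using translates_into_set[OF F(2) y_mem(1)[OF F(3)] P(2)] F(3-5) by auto
      then show False using large by (meson leD)
    qed
    then obtain h i where h: "h \<in> F" "inv h \<otimes> y \<in> P i" "i \<noteq> j"
      using y_mem by blast
    have "inv h \<otimes> g\<^sub>1 = (inv h \<otimes> y) \<otimes> inv (inv g\<^sub>1 \<otimes> y)"
      using F(2,3) h(1) y_mem(1)[OF h(1)] by (simp add: quotient_of_translates subsetD)
    then have "j \<in> I (inv h \<otimes> g\<^sub>1)"
      unfolding I_def mem_set_mult_set_inv using h(2,3) j by blast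
    moreover have "y \<in> g\<^sub>1 <# P j"
      using mem_l_coset_iff[of g\<^sub>1 "P j" y] F(2,3) P(1) j y_mem(1)[OF F(3)] by blast
    ultimately show "y \<in> (\<Union>g\<in>F. \<Union>h\<in>F. \<Union>i\<in>I (inv h \<otimes> g). g <# P i)"
      using F(3) h(1) by blast
  qed
  moreover have "finite (\<Union>g\<in>F. \<Union>h\<in>F. \<Union>i\<in>I (inv h \<otimes> g). g <# P i)"
    using F(1) cross P(2) unfolding I_def l_coset_def by auto
  ultimately show ?thesis using finite_subset by blast
qed

lemma UN_in_SpI:
  fixes P :: "nat \<Rightarrow> 'a set"
  assumes P: "\<And>j. P j \<subseteq> carrier G" "\<And>j. finite (P j)"
    and cross: "\<And>w. finite {i. \<exists>j. j \<noteq> i \<and> w \<in> P j <#> set_inv (P i)}"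
    and same_card: "\<And>i j u. u \<in> diff_set (P i) \<Longrightarrow> u \<in> diff_set (P j) \<Longrightarrow> card (P i) = card (P j)"
  shows "(\<Union>j. P j) \<in> Sp G"
proof -
  have "\<exists>F. F \<subseteq> X \<and> finite F \<and> F \<noteq> {} \<and> finite (\<Inter>g\<in>F. g <# (\<Union>j. P j))"
    if X: "X \<subseteq> carrier G" "infinite X" for X
  proof -
    obtain T where "finite T" "card T = 2" "T \<subseteq> X"
      using infinite_arbitrarily_large[OF X(2)] by blast
    then obtain g\<^sub>1 g\<^sub>2 where g: "g\<^sub>1 \<in> X" "g\<^sub>2 \<in> X" "g\<^sub>1 \<noteq> g\<^sub>2"
      by (auto simp: card_2_iff)
    obtain N where N: "\<And>j. inv g\<^sub>2 \<otimes> g\<^sub>1 \<in> diff_set (P j) \<Longrightarrow> card (P j) \<le> N"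
    proof (cases "\<exists>j. inv g\<^sub>2 \<otimes> g\<^sub>1 \<in> diff_set (P j)")
      case True
      then obtain j\<^sub>0 where j\<^sub>0: "inv g\<^sub>2 \<otimes> g\<^sub>1 \<in> diff_set (P j\<^sub>0)" by blast
      have "card (P j) \<le> card (P j\<^sub>0)" if "inv g\<^sub>2 \<otimes> g\<^sub>1 \<in> diff_set (P j)" for j
        using same_card[OF that j\<^sub>0] by simp
      then show thesis by (rule that)
    qed blast
    obtain F\<^sub>0 where F\<^sub>0: "finite F\<^sub>0" "card F\<^sub>0 = N" "F\<^sub>0 \<subseteq> X - {g\<^sub>1, g\<^sub>2}"
      using infinite_arbitrarily_large[of "X - {g\<^sub>1, g\<^sub>2}"] X(2) by auto
    define F where "F = insert g\<^sub>1 (insert g\<^sub>2 F\<^sub>0)"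
    have F: "finite F" "F \<subseteq> X" "F \<subseteq> carrier G" "g\<^sub>1 \<in> F" "g\<^sub>2 \<in> F"
      unfolding F_def using F\<^sub>0 g X(1) by auto
    have "g\<^sub>1 \<notin> F\<^sub>0" "g\<^sub>2 \<notin> F\<^sub>0" using F\<^sub>0(3) by auto
    then have "card F = N + 2" unfolding F_def using F\<^sub>0(1,2) g(3) by simp
    then have "card (P j) < card F" if "inv g\<^sub>2 \<otimes> g\<^sub>1 \<in> diff_set (P j)" for j
      using N[OF that] by linarith
    then have "finite (\<Inter>g\<in>F. g <# (\<Union>j. P j))"
      by (rule finite_Inter_l_coset_UN[OF P cross F(1,3-5) g(3)])
    then show ?thesis using F(1,2,4) by blast
  qed
  moreover have "(\<Union>j. P j) \<subseteq> carrier G" using P(1) by blast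
  ultimately show ?thesis unfolding Sp_def by simp
qed

lemma not_n_thin_if_translates:
  assumes "L \<subseteq> carrier G" "card L = Suc n" "Y \<subseteq> carrier G" "infinite Y"
    and "\<And>y. y \<in> Y \<Longrightarrow> L #> y \<subseteq> B"
  shows "\<not> n_thin G n B"
proof
  assume thin: "n_thin G n B"
  have "m_inv G ` L \<subseteq> carrier G" using assms(1) by auto
  moreover have "card (m_inv G ` L) = Suc n"
    using assms(2) card_image[OF inj_on_subset[OF inv_inj assms(1)]] by simp
  ultimately have "finite (\<Inter>g\<in>m_inv G ` L. g <# B)" by (rule n_thin_finite_Inter[OF thin])
  moreover have "Y \<subseteq> (\<Inter>g\<in>m_inv G ` L. g <# B)"
  proof (intro subsetI INT_I)
    fix y g assume "y \<in> Y" "g \<in> m_inv G ` L"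
    then obtain a where a: "a \<in> L" "g = inv a" "a \<otimes> y \<in> B"
      using assms(5) unfolding r_coset_eq_image by blast
    then have "y = inv a \<otimes> (a \<otimes> y)" using assms(1,3) \<open>y \<in> Y\<close> by (simp add: subsetD)
    then show "y \<in> g <# B" unfolding l_coset_def using a by blast
  qed
  ultimately show False using assms(4) finite_subset by blast
qed

end

section \<open>A sparse set that is not finitely thin\<close>

lemma infinite_prod_decode_fiber: "infinite {j. fst (prod_decode j) = n}"
proof -
  have "inj (\<lambda>k. prod_encode (n, k))" by (simp add: inj_def prod_encode_eq)
  then have "infinite (range (\<lambda>k. prod_encode (n, k)))" by (simp add: finite_image_iff)
  moreover have "range (\<lambda>k. prod_encode (n, k)) \<subseteq> {j. fst (prod_decode j) = n}" by auto
  ultimately show ?thesis using finite_subset by blast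
qed

lemma inj_if_fresh:
  fixes x :: "nat \<Rightarrow> 'a"
  assumes "\<And>j. x j \<notin> x ` {..<j}"
  shows "inj x"
proof (rule injI)
  fix i j assume eq: "x i = x j"
  show "i = j"
  proof (rule ccontr)
    assume "i \<noteq> j"
    then have "x i \<in> x ` {..<j} \<or> x j \<in> x ` {..<i}" by (auto simp: linorder_neq_iff)
    then show False using assms eq by metis
  qed
qed

context group
begin

lemma finite_diff_set: "finite L \<Longrightarrow> finite (diff_set L)"
proof -
  assume "finite L"
  moreover have "diff_set L \<subseteq> (\<lambda>(a, b). a \<otimes> inv b) ` (L \<times> L)"
    unfolding diff_set_def by auto
  ultimately show ?thesis using finite_subset by blast
qed

lemma diff_set_insert:
  "diff_set (insert c L) \<subseteq> diff_set L \<union> (\<Union>b\<in>L. {c \<otimes> inv b, b \<otimes> inv c})"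
  unfolding diff_set_def by blast

lemma finite_translates_meeting:
  assumes "finite L" "finite Q" "finite T" "L \<subseteq> carrier G" "Q \<subseteq> carrier G"
  shows "finite {y \<in> carrier G. \<exists>a\<in>L. \<exists>b\<in>Q. (a \<otimes> y) \<otimes> inv b \<in> T \<or> b \<otimes> inv (a \<otimes> y) \<in> T}"
proof (rule finite_subset)
  let ?sol = "\<lambda>(a, t, b). {inv a \<otimes> (t \<otimes> b), inv a \<otimes> (inv t \<otimes> b)}"
  show "finite (\<Union>(?sol ` (L \<times> T \<times> Q)))" using assms(1-3) by auto
  show "{y \<in> carrier G. \<exists>a\<in>L. \<exists>b\<in>Q. (a \<otimes> y) \<otimes> inv b \<in> T \<or> b \<otimes> inv (a \<otimes> y) \<in> T}
    \<subseteq> \<Union>(?sol ` (L \<times> T \<times> Q))"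
  proof
    fix y assume "y \<in> {y \<in> carrier G. \<exists>a\<in>L. \<exists>b\<in>Q. (a \<otimes> y) \<otimes> inv b \<in> T \<or> b \<otimes> inv (a \<otimes> y) \<in> T}"
    then obtain a b where y: "y \<in> carrier G" and ab: "a \<in> L" "b \<in> Q"
      and "(a \<otimes> y) \<otimes> inv b \<in> T \<or> b \<otimes> inv (a \<otimes> y) \<in> T" by blast
    then obtain t where t: "t \<in> T" "t = (a \<otimes> y) \<otimes> inv b \<or> t = b \<otimes> inv (a \<otimes> y)" by blast
    have a: "a \<in> carrier G" and b: "b \<in> carrier G" using ab assms(4,5) by auto
    have "t \<otimes> b = a \<otimes> y \<or> inv t \<otimes> b = a \<otimes> y"
      using t(2) a b y by (auto simp: m_assoc inv_mult_group)
    then have "y \<in> ?sol (a, t, b)" using a y by auto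
    then show "y \<in> \<Union>(?sol ` (L \<times> T \<times> Q))" using ab t(1) by blast
  qed
qed

lemma exists_translate_avoiding:
  assumes "infinite (carrier G)" "finite E" "finite L" "finite Q" "finite T"
    "L \<subseteq> carrier G" "Q \<subseteq> carrier G"
  obtains y where "y \<in> carrier G" "y \<notin> E"
    "\<And>a b. a \<in> L \<Longrightarrow> b \<in> Q \<Longrightarrow> (a \<otimes> y) \<otimes> inv b \<notin> T \<and> b \<otimes> inv (a \<otimes> y) \<notin> T"
proof -
  define bad where "bad = E \<union>
    {y \<in> carrier G. \<exists>a\<in>L. \<exists>b\<in>Q. (a \<otimes> y) \<otimes> inv b \<in> T \<or> b \<otimes> inv (a \<otimes> y) \<in> T}"
  have "finite bad" unfolding bad_def using finite_translates_meeting[OF assms(3-7)] assms(2) by simp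
  then have "infinite (carrier G - bad)" using assms(1) by (rule Diff_infinite_finite)
  then obtain y where "y \<in> carrier G - bad" by (metis ex_in_conv finite.emptyI)
  then show thesis by (intro that) (auto simp: bad_def)
qed

lemma exists_diff_set_avoiding:
  assumes "infinite (carrier G)" "finite E"
  shows "\<exists>L. L \<subseteq> carrier G \<and> finite L \<and> card L = k \<and> diff_set L \<inter> E = {}"
proof (induction k)
  case 0
  show ?case by (intro exI[of _ "{}"]) (simp add: diff_set_def)
next
  case (Suc k)
  then obtain L where L: "L \<subseteq> carrier G" "finite L" "card L = k" "diff_set L \<inter> E = {}"
    by blast
  have one: "finite {\<one>}" "{\<one>} \<subseteq> carrier G" by auto
  obtain c where c: "c \<in> carrier G" "c \<notin> L"
    and avoid: "\<And>a b. a \<in> {\<one>} \<Longrightarrow> b \<in> L \<Longrightarrow> (a \<otimes> c) \<otimes> inv b \<notin> E \<and> b \<otimes> inv (a \<otimes> c) \<notin> E"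
    using exists_translate_avoiding[OF assms(1) L(2) one(1) L(2) assms(2) one(2) L(1)] by blast
  have "\<forall>b\<in>L. c \<otimes> inv b \<notin> E \<and> b \<otimes> inv c \<notin> E" using avoid[of \<one>] c(1) by simp
  then have "diff_set (insert c L) \<inter> E = {}" using diff_set_insert L(4) by blast
  then show ?case using L c by (intro exI[of _ "insert c L"]) auto
qed

lemma exists_diff_set_disjoint_seq:
  assumes "infinite (carrier G)"
  obtains L :: "nat \<Rightarrow> 'a set" where "\<And>n. L n \<subseteq> carrier G" "\<And>n. finite (L n)"
    "\<And>n. card (L n) = Suc n" "\<And>n m u. u \<in> diff_set (L n) \<Longrightarrow> u \<in> diff_set (L m) \<Longrightarrow> n = m"
proof -
  define R where "R f n L \<longleftrightarrow> L \<subseteq> carrier G \<and> finite L \<and> card L = Suc n \<and>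
    diff_set L \<inter> (\<Union>m<n. diff_set (f m)) = {}" for f :: "nat \<Rightarrow> 'a set" and n L
  have "\<exists>L. \<forall>n. R L n (L n)"
  proof (rule dependent_wellorder_choice)
    fix f :: "nat \<Rightarrow> 'a set" and n
    assume "\<And>m. m < n \<Longrightarrow> R f m (f m)"
    then have "finite (\<Union>m<n. diff_set (f m))" unfolding R_def using finite_diff_set by blast
    then show "\<exists>L. R f n L" unfolding R_def using exists_diff_set_avoiding[OF assms] by blast
  qed (simp add: R_def)
  then obtain L where L: "\<And>n. R L n (L n)" by blast
  show thesis
  proof (rule that)
    show "L n \<subseteq> carrier G" "finite (L n)" "card (L n) = Suc n" for n
      using L unfolding R_def by blast+
    show "n = m" if "u \<in> diff_set (L n)" "u \<in> diff_set (L m)" for n m u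
      using L[of n] L[of m] that unfolding R_def by (cases n m rule: linorder_cases) blast+
  qed
qed

text \<open>Keeping these sets disjoint for
  different \<open>k\<close> makes every element a quotient of only finitely many pairs of distinct pieces.\<close>

definition cross_diffs :: "(nat \<Rightarrow> 'a set) \<Rightarrow> nat \<Rightarrow> 'a set" where
  "cross_diffs P k = (\<Union>i<k. (P k <#> set_inv (P i)) \<union> (P i <#> set_inv (P k)))"

lemma mem_cross_diffs_max:
  assumes "j \<noteq> i" "w \<in> P j <#> set_inv (P i)"
  shows "w \<in> cross_diffs P (max i j)"
proof (cases "i < j")
  case True
  then show ?thesis unfolding cross_diffs_def using assms(2) by (auto simp: max_def intro!: bexI[of _ i])
next
  case False
  then have "j < i" using assms(1) by simp
  then show ?thesis unfolding cross_diffs_def using assms(2) by (auto simp: max_def intro!: bexI[of _ j])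
qed

lemma cross_diffs_unique:
  assumes "\<And>j. cross_diffs P j \<inter> (\<Union>k<j. cross_diffs P k) = {}"
    and "w \<in> cross_diffs P k" "w \<in> cross_diffs P k'"
  shows "k = k'"
proof (rule ccontr)
  assume "k \<noteq> k'"
  then consider "k < k'" | "k' < k" by linarith
  then show False
  proof cases
    case 1
    then have "w \<in> cross_diffs P k' \<inter> (\<Union>m<k'. cross_diffs P m)" using assms(2,3) by blast
    then show False using assms(1) by blast
  next
    case 2
    then have "w \<in> cross_diffs P k \<inter> (\<Union>m<k. cross_diffs P m)" using assms(2,3) by blast
    then show False using assms(1) by blast
  qed
qed

lemma finite_cross_pairs:
  assumes "\<And>j. cross_diffs P j \<inter> (\<Union>k<j. cross_diffs P k) = {}"
  shows "finite {i. \<exists>j. j \<noteq> i \<and> w \<in> P j <#> set_inv (P i)}"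
proof (cases "\<exists>i j. j \<noteq> i \<and> w \<in> P j <#> set_inv (P i)")
  case True
  then obtain i\<^sub>0 j\<^sub>0 where "j\<^sub>0 \<noteq> i\<^sub>0" "w \<in> P j\<^sub>0 <#> set_inv (P i\<^sub>0)" by blast
  then have w: "w \<in> cross_diffs P (max i\<^sub>0 j\<^sub>0)" by (rule mem_cross_diffs_max)
  have "i \<le> max i\<^sub>0 j\<^sub>0" if "j \<noteq> i" "w \<in> P j <#> set_inv (P i)" for i j
    using cross_diffs_unique[OF assms mem_cross_diffs_max[OF that] w] by simp
  then have "{i. \<exists>j. j \<noteq> i \<and> w \<in> P j <#> set_inv (P i)} \<subseteq> {..max i\<^sub>0 j\<^sub>0}" by blast
  then show ?thesis using finite_subset by blast
next
  case False
  then have "{i. \<exists>j. j \<noteq> i \<and> w \<in> P j <#> set_inv (P i)} = {}" by auto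
  then show ?thesis by (simp only: finite.emptyI)
qed

lemma finite_cross_diffs: "(\<And>i. finite (P i)) \<Longrightarrow> finite (cross_diffs P k)"
  unfolding cross_diffs_def set_mult_def SET_INV_def by simp

lemma cross_diffs_cong: "(\<And>i. i \<le> k \<Longrightarrow> P i = P' i) \<Longrightarrow> cross_diffs P k = cross_diffs P' k"
  unfolding cross_diffs_def by simp

lemma cross_diffsD:
  "w \<in> cross_diffs P k \<Longrightarrow> \<exists>a\<in>P k. \<exists>b\<in>(\<Union>i<k. P i). w = a \<otimes> inv b \<or> w = b \<otimes> inv a"
  unfolding cross_diffs_def by (auto simp: mem_set_mult_set_inv)

lemma exists_separating_translation_step:
  assumes "infinite (carrier G)" "\<And>j. L j \<subseteq> carrier G" "\<And>j. finite (L j)"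
    and f: "\<And>i. i < j \<Longrightarrow> f i \<in> carrier G"
  obtains y where "y \<in> carrier G" "y \<notin> f ` {..<j}"
    "cross_diffs (\<lambda>i. L i #> (f(j := y)) i) j \<inter> (\<Union>k<j. cross_diffs (\<lambda>i. L i #> f i) k) = {}"
proof -
  define Q where "Q = (\<Union>i<j. L i #> f i)"
  define T where "T = (\<Union>k<j. cross_diffs (\<lambda>i. L i #> f i) k)"
  have Q: "finite Q" "Q \<subseteq> carrier G"
    using f assms(2,3) unfolding Q_def r_coset_eq_image by (auto intro: m_closed)
  have "finite T" unfolding T_def using assms(3) by (simp add: r_coset_eq_image finite_cross_diffs)
  obtain y where y: "y \<in> carrier G" "y \<notin> f ` {..<j}"
    and avoid: "\<And>a b. a \<in> L j \<Longrightarrow> b \<in> Q \<Longrightarrow> (a \<otimes> y) \<otimes> inv b \<notin> T \<and> b \<otimes> inv (a \<otimes> y) \<notin> T"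
    using exists_translate_avoiding[OF assms(1) _ assms(3) Q(1) \<open>finite T\<close> assms(2) Q(2)] by blast
  have "w \<notin> T" if w: "w \<in> cross_diffs (\<lambda>i. L i #> (f(j := y)) i) j" for w
  proof -
    have "(\<Union>i<j. L i #> (f(j := y)) i) = Q" unfolding Q_def by simp
    then obtain a b where "a \<in> L j" "b \<in> Q" "w = (a \<otimes> y) \<otimes> inv b \<or> w = b \<otimes> inv (a \<otimes> y)"
      using cross_diffsD[OF w] unfolding r_coset_eq_image by auto
    then show ?thesis using avoid by blast
  qed
  then have "cross_diffs (\<lambda>i. L i #> (f(j := y)) i) j \<inter> T = {}" by blast
  then show thesis using y unfolding T_def by (intro that)
qed

lemma exists_separating_translations:
  assumes "infinite (carrier G)" "\<And>j. L j \<subseteq> carrier G" "\<And>j. finite (L j)"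
  obtains x where "inj x" "\<And>j. x j \<in> carrier G"
    "\<And>j. cross_diffs (\<lambda>i. L i #> x i) j \<inter> (\<Union>k<j. cross_diffs (\<lambda>i. L i #> x i) k) = {}"
proof -
  define R where "R f j y \<longleftrightarrow> y \<in> carrier G \<and> y \<notin> f ` {..<j} \<and>
    cross_diffs (\<lambda>i. L i #> (f(j := y)) i) j \<inter> (\<Union>k<j. cross_diffs (\<lambda>i. L i #> f i) k) = {}"
    for f :: "nat \<Rightarrow> 'a" and j y
  have "\<exists>x. \<forall>j. R x j (x j)"
  proof (rule dependent_wellorder_choice)
    fix f g :: "nat \<Rightarrow> 'a" and j y
    assume fg: "\<And>i. i < j \<Longrightarrow> f i = g i"
    then have "f ` {..<j} = g ` {..<j}" by simp
    moreover have "cross_diffs (\<lambda>i. L i #> (f(j := y)) i) j = cross_diffs (\<lambda>i. L i #> (g(j := y)) i) j"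
      using fg by (intro cross_diffs_cong) simp
    moreover have "(\<Union>k<j. cross_diffs (\<lambda>i. L i #> f i) k) = (\<Union>k<j. cross_diffs (\<lambda>i. L i #> g i) k)"
    proof (rule SUP_cong[OF refl])
      fix k assume "k \<in> {..<j}"
      then show "cross_diffs (\<lambda>i. L i #> f i) k = cross_diffs (\<lambda>i. L i #> g i) k"
        using fg by (intro cross_diffs_cong) simp
    qed
    ultimately show "R f j y = R g j y" unfolding R_def by simp
  next
    fix f :: "nat \<Rightarrow> 'a" and j
    assume "\<And>i. i < j \<Longrightarrow> R f i (f i)"
    then have "f i \<in> carrier G" if "i < j" for i using that unfolding R_def by blast
    then obtain y where "y \<in> carrier G" "y \<notin> f ` {..<j}"
      "cross_diffs (\<lambda>i. L i #> (f(j := y)) i) j \<inter> (\<Union>k<j. cross_diffs (\<lambda>i. L i #> f i) k) = {}"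
      by (rule exists_separating_translation_step[OF assms])
    then show "\<exists>y. R f j y" unfolding R_def by blast
  qed
  then obtain x where x: "\<And>j. R x j (x j)" by blast
  show thesis
  proof (rule that)
    have "x j \<notin> x ` {..<j}" for j using x[of j] unfolding R_def by blast
    then show "inj x" by (rule inj_if_fresh)
    show "x j \<in> carrier G" for j using x unfolding R_def by blast
    show "cross_diffs (\<lambda>i. L i #> x i) j \<inter> (\<Union>k<j. cross_diffs (\<lambda>i. L i #> x i) k) = {}" for j
      using x[of j] unfolding R_def by simp
  qed
qed

lemma exists_sparse_not_FT:
  assumes "infinite (carrier G)"
  obtains B where "B \<in> Sp G" "B \<notin> FT G"
proof -
  obtain L where L: "\<And>n. L n \<subseteq> carrier G" "\<And>n. finite (L n)" "\<And>n. card (L n) = Suc n"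
    and L_diff: "\<And>n m u. u \<in> diff_set (L n) \<Longrightarrow> u \<in> diff_set (L m) \<Longrightarrow> n = m"
    using exists_diff_set_disjoint_seq[OF assms] by blast
  \<comment> \<open>\<open>\<nu>\<close> takes every value infinitely often, so every \<open>L n\<close> is translated infinitely often\<close>
  define \<nu> :: "nat \<Rightarrow> nat" where "\<nu> j = fst (prod_decode j)" for j
  obtain x where x: "inj x" "\<And>j. x j \<in> carrier G"
    "\<And>j. cross_diffs (\<lambda>i. L (\<nu> i) #> x i) j \<inter> (\<Union>k<j. cross_diffs (\<lambda>i. L (\<nu> i) #> x i) k) = {}"
    using exists_separating_translations[OF assms L(1) L(2)] by blast
  define P where "P j = L (\<nu> j) #> x j" for j
  have P: "P j \<subseteq> carrier G" "finite (P j)" "card (P j) = Suc (\<nu> j)"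
    "diff_set (P j) = diff_set (L (\<nu> j))" for j
    unfolding P_def using r_coset_subset_G card_r_coset diff_set_r_coset L x(2)
    by (simp_all add: r_coset_eq_image)
  have "(\<Union>j. P j) \<in> Sp G"
  proof (rule UN_in_SpI[OF P(1) P(2)])
    show "finite {i. \<exists>j. j \<noteq> i \<and> w \<in> P j <#> set_inv (P i)}" for w
      unfolding P_def by (rule finite_cross_pairs[OF x(3)])
    show "card (P i) = card (P j)" if "u \<in> diff_set (P i)" "u \<in> diff_set (P j)" for i j u
      using that L_diff P(3,4) by metis
  qed
  moreover have "(\<Union>j. P j) \<notin> FT G"
  proof
    assume "(\<Union>j. P j) \<in> FT G"
    then obtain n where thin: "n_thin G n (\<Union>j. P j)" unfolding FT_def by blast
    have "inj_on x {j. \<nu> j = n}" using x(1) by (simp add: inj_on_def inj_def)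
    then have "infinite (x ` {j. \<nu> j = n})"
      using infinite_prod_decode_fiber[of n] by (simp add: finite_image_iff \<nu>_def)
    moreover have "x ` {j. \<nu> j = n} \<subseteq> carrier G" using x(2) by blast
    moreover have "L n #> y \<subseteq> (\<Union>j. P j)" if "y \<in> x ` {j. \<nu> j = n}" for y
      using that unfolding P_def by blast
    ultimately show False using not_n_thin_if_translates[OF L(1) L(3)] thin by blast
  qed
  ultimately show thesis using that by blast
qed

end

theorem theorem6p6:
  fixes G :: "('a, 'b) monoid_scheme"
  assumes "group G" and "infinite (carrier G)"
  shows "FT G \<subset> Sp G \<and>
         uf_closure G {uf_mult G p q | p q. p \<in> freeUF G \<and> q \<in> freeUF G}
           \<subset> ideal_hat G (FT G)"
proof -
  interpret group G by (rule assms(1))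
  let ?S = "{uf_mult G p q | p q. p \<in> freeUF G \<and> q \<in> freeUF G}"
  obtain B where B: "B \<in> Sp G" "B \<notin> FT G" using exists_sparse_not_FT[OF assms(2)] .
  have avoid_Sp: "A \<notin> q" if "A \<in> Sp G" "q \<in> ?S" for A q
    using that Sp_notin_uf_mult by blast
  have FT_Pow: "FT G \<subseteq> Pow (carrier G)" unfolding FT_def by blast
  have "uf_closure G ?S \<subseteq> ideal_hat G (FT G)"
  proof (rule uf_closure_subset_ideal_hat[OF FT_Pow])
    fix A q assume "A \<in> FT G" "q \<in> ?S"
    then show "A \<notin> q" using avoid_Sp FT_subset_Sp by blast
  qed
  moreover have "\<not> ideal_hat G (FT G) \<subseteq> uf_closure G ?S"
  proof (rule ideal_hat_not_subset_uf_closure[where B = B, OF FT_Pow FT_Union FT_subset])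
    show "B \<subseteq> carrier G" using B(1) unfolding Sp_def by blast
    show "B \<notin> q" if "q \<in> ?S" for q using avoid_Sp[OF B(1) that] .
    show "B \<notin> FT G" by (rule B(2))
  qed
  ultimately show ?thesis using FT_subset_Sp B by blast
qed

end
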